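(* Let $(M,\circ)$ be a fuzzy $\Gamma$-hypersemigroup and let $(M,\ast)$ be its associated $\Gamma$-hypersemigroup, where $a\ast\gamma\ast b=\{x\in M\mid (a\circ\gamma\circ b)(x)>0\}$ for all $a,b\in M$, $\gamma\in\Gamma$. Let $\rho$ be an equivalence relation on $M$, and on $M/\rho=\{a\rho : a\in M\}$ define $a\rho\otimes\gamma\otimes b\rho=\{c\rho : c\in a\ast\gamma\ast b\}=\{c\rho : (a\circ\gamma\circ b)(c)>0\}$. Then: (i) $\rho$ is a fuzzy $\Gamma$-regular relation on $(M,\circ)$ if and only if $(M/\rho,\otimes)$ is a $\Gamma$-hypersemigroup. (ii) $\rho$ is a fuzzy $\Gamma$-strongly regular relation on $(M,\circ)$ if and only if $(M/\rho,\otimes)$ is a $\Gamma$-semigroup.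
   Context: $M$ and $\Gamma$ are non-empty sets; $F(M)$ is the set of fuzzy subsets of $M$. A fuzzy $\Gamma$-hyperoperation is a map $M\times\Gamma\times M\to F(M)$, $(a,\gamma,b)\mapsto a\circ\gamma\circ b$. For a fuzzy subset $\mu\neq 0$, $(a\circ\alpha\circ\mu)(r)=\bigvee_{t\in M}((a\circ\alpha\circ t)(r)\wedge\mu(t))$ and $(\mu\circ\alpha\circ a)(r)=\bigvee_{t\in M}(\mu(t)\wedge(t\circ\alpha\circ a)(r))$ (both $0$ if $\mu=0$). $(M,\circ)$ is a fuzzy $\Gamma$-hypersemigroup if $(a\circ\alpha\circ b)\circ\beta\circ c=a\circ\alpha\circ(b\circ\beta\circ c)$ for all $a,b,c\in M$, $\alpha,\beta\in\Gamma$. A $\Gamma$-hypersemigroup is a set $M$ where each $\gamma\in\Gamma$ is a hyperoperation $x\gamma y\subseteq M$ (non-empty) with $x\alpha(y\beta z)=(x\alpha y)\beta z$; it is a $\Gamma$-semigroup when each $\gamma$ is an operation (single-valued). For an equivalence relation $\rho$ on $M$ and fuzzy subsets $\mu,\nu$, write $\mu\rho\nu$ if (1) $\mu(a)>0$ implies there is $b$ with $\nu(b)>0$ and $a\rho b$, and (2) $\nu(x)>0$ implies there is $y$ with $\mu(y)>0$ and $x\rho y$. $\rho$ is a fuzzy $\Gamma$-regular relation on $(M,\circ)$ if for all $a,b,c\in M$, $\gamma\in\Gamma$: $a\rho b$ implies $(a\circ\gamma\circ c)\rho(b\circ\gamma\circ c)$ and $(c\circ\gamma\circ a)\rho(c\circ\gamma\circ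 b)$. $\rho$ is a fuzzy $\Gamma$-strongly regular relation on $(M,\circ)$ if for all $a,b,c,d\in M$, $\gamma\in\Gamma$ with $a\rho b$ and $c\rho d$: for all $x$ with $(a\circ\gamma\circ c)(x)>0$ and all $y$ with $(b\circ\gamma\circ d)(y)>0$, we have $x\rho y$. *)

theory Defs
  imports Complex_Main
begin

text \<open>M is modelled by the type 'm, \<Gamma> by the type 'g (types are non-empty).
  A fuzzy \<Gamma>-hyperoperation is circ :: 'm \<Rightarrow> 'g \<Rightarrow> 'm \<Rightarrow> ('m \<Rightarrow> real),
  where circ a \<gamma> b is the fuzzy subset a \<circ> \<gamma> \<circ> b.\<close>

definition is_fuzzy :: "('m \<Rightarrow> real) \<Rightarrow> bool" where
  "is_fuzzy \<mu> \<longleftrightarrow> (\<forall>x. 0 \<le> \<mu> x \<and> \<mu> x \<le> 1)"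

definition lcomp :: "('m \<Rightarrow> 'g \<Rightarrow> 'm \<Rightarrow> 'm \<Rightarrow> real) \<Rightarrow> 'm \<Rightarrow> 'g \<Rightarrow> ('m \<Rightarrow> real) \<Rightarrow> 'm \<Rightarrow> real" where
  "lcomp circ a \<alpha> \<mu> r = (if \<mu> = (\<lambda>_. 0) then 0 else (SUP t. min (circ a \<alpha> t r) (\<mu> t)))"

definition rcomp :: "('m \<Rightarrow> 'g \<Rightarrow> 'm \<Rightarrow> 'm \<Rightarrow> real) \<Rightarrow> ('m \<Rightarrow> real) \<Rightarrow> 'g \<Rightarrow> 'm \<Rightarrow> 'm \<Rightarrow> real" where
  "rcomp circ \<mu> \<alpha> a r = (if \<mu> = (\<lambda>_. 0) then 0 else (SUP t. min (\<mu> t) (circ t \<alpha> a r)))"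

definition fuzzy_Gamma_hypersemigroup :: "('m \<Rightarrow> 'g \<Rightarrow> 'm \<Rightarrow> 'm \<Rightarrow> real) \<Rightarrow> bool" where
  "fuzzy_Gamma_hypersemigroup circ \<longleftrightarrow>
     (\<forall>a \<gamma> b. is_fuzzy (circ a \<gamma> b)) \<and>
     (\<forall>a b c \<alpha> \<beta>. rcomp circ (circ a \<alpha> b) \<beta> c = lcomp circ a \<alpha> (circ b \<beta> c))"

definition assoc_hyper :: "('m \<Rightarrow> 'g \<Rightarrow> 'm \<Rightarrow> 'm \<Rightarrow> real) \<Rightarrow> 'm \<Rightarrow> 'g \<Rightarrow> 'm \<Rightarrow> 'm set" where
  "assoc_hyper circ a \<gamma> b = {x. circ a \<gamma> b x > 0}"

definition Gamma_hypersemigroup :: "'x set \<Rightarrow> ('x \<Rightarrow> 'g \<Rightarrow> 'x \<Rightarrow> 'x set) \<Rightarrow> bool" where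
  "Gamma_hypersemigroup S h \<longleftrightarrow>
     (\<forall>x\<in>S. \<forall>y\<in>S. \<forall>\<gamma>. h x \<gamma> y \<noteq> {} \<and> h x \<gamma> y \<subseteq> S) \<and>
     (\<forall>x\<in>S. \<forall>y\<in>S. \<forall>z\<in>S. \<forall>\<alpha> \<beta>.
        (\<Union>u\<in>h x \<alpha> y. h u \<beta> z) = (\<Union>v\<in>h y \<beta> z. h x \<alpha> v))"

definition Gamma_semigroup :: "'x set \<Rightarrow> ('x \<Rightarrow> 'g \<Rightarrow> 'x \<Rightarrow> 'x set) \<Rightarrow> bool" where
  "Gamma_semigroup S h \<longleftrightarrow> Gamma_hypersemigroup S h \<and>
     (\<forall>x\<in>S. \<forall>y\<in>S. \<forall>\<gamma>. \<exists>w. h x \<gamma> y = {w})"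

definition fuzzy_rel :: "('m \<times> 'm) set \<Rightarrow> ('m \<Rightarrow> real) \<Rightarrow> ('m \<Rightarrow> real) \<Rightarrow> bool" where
  "fuzzy_rel \<rho> \<mu> \<nu> \<longleftrightarrow>
     (\<forall>a. \<mu> a > 0 \<longrightarrow> (\<exists>b. \<nu> b > 0 \<and> (a, b) \<in> \<rho>)) \<and>
     (\<forall>x. \<nu> x > 0 \<longrightarrow> (\<exists>y. \<mu> y > 0 \<and> (x, y) \<in> \<rho>))"

definition fuzzy_Gamma_regular :: "('m \<Rightarrow> 'g \<Rightarrow> 'm \<Rightarrow> 'm \<Rightarrow> real) \<Rightarrow> ('m \<times> 'm) set \<Rightarrow> bool" where
  "fuzzy_Gamma_regular circ \<rho> \<longleftrightarrow>
     (\<forall>a b c \<gamma>. (a, b) \<in> \<rho> \<longrightarrow>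
        fuzzy_rel \<rho> (circ a \<gamma> c) (circ b \<gamma> c) \<and> fuzzy_rel \<rho> (circ c \<gamma> a) (circ c \<gamma> b))"

definition fuzzy_Gamma_strongly_regular :: "('m \<Rightarrow> 'g \<Rightarrow> 'm \<Rightarrow> 'm \<Rightarrow> real) \<Rightarrow> ('m \<times> 'm) set \<Rightarrow> bool" where
  "fuzzy_Gamma_strongly_regular circ \<rho> \<longleftrightarrow>
     (\<forall>a b c d \<gamma>. (a, b) \<in> \<rho> \<longrightarrow> (c, d) \<in> \<rho> \<longrightarrow>
        (\<forall>x y. circ a \<gamma> c x > 0 \<longrightarrow> circ b \<gamma> d y > 0 \<longrightarrow> (x, y) \<in> \<rho>))"

text \<open>h is the (well-defined) hyperoperation \<otimes> on M/\<rho>: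
  a\<rho> \<otimes> \<gamma> \<otimes> b\<rho> = {c\<rho> | (a \<circ> \<gamma> \<circ> b)(c) > 0} for all representatives a, b.\<close>
definition quotient_op :: "('m \<Rightarrow> 'g \<Rightarrow> 'm \<Rightarrow> 'm \<Rightarrow> real) \<Rightarrow> ('m \<times> 'm) set
    \<Rightarrow> ('m set \<Rightarrow> 'g \<Rightarrow> 'm set \<Rightarrow> 'm set set) \<Rightarrow> bool" where
  "quotient_op circ \<rho> h \<longleftrightarrow>
     (\<forall>a b \<gamma>. h (\<rho> `` {a}) \<gamma> (\<rho> `` {b}) = {\<rho> `` {c} | c. c \<in> assoc_hyper circ a \<gamma> b})"

end

theory Submission
  imports Defs
begin

text \<open>Two fuzzy subsets are \<open>\<rho>\<close>-related exactly when their supports meet the same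
  \<open>\<rho>\<close>-classes. Hence regularity says that the set of classes met by \<open>a \<circ> \<gamma> \<circ> b\<close> depends
  only on the classes of \<open>a\<close> and \<open>b\<close>, which is precisely the well-definedness of \<open>\<otimes>\<close>;
  associativity of \<open>\<otimes>\<close> is then the image of associativity of \<open>\<ast>\<close> under the quotient
  map. Strong regularity says moreover that each support lies in a single class, i.e.
  that \<open>\<otimes>\<close> is single-valued.\<close>

abbreviation classes :: "('m \<times> 'm) set \<Rightarrow> 'm set \<Rightarrow> 'm set set" where
  "classes \<rho> A \<equiv> (\<lambda>x. \<rho> `` {x}) ` A"

lemma classes_subset_iff:
  assumes "equiv UNIV \<rho>"
  shows "classes \<rho> A \<subseteq> classes \<rho> B \<longleftrightarrow> (\<forall>a\<in>A. \<exists>b\<in>B. (a, b) \<in> \<rho>)"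
  by (simp add: image_subset_iff image_iff equiv_class_eq_iff[OF assms])

lemma fuzzy_rel_iff_classes_eq:
  assumes "equiv UNIV \<rho>"
  shows "fuzzy_rel \<rho> \<mu> \<nu> \<longleftrightarrow> classes \<rho> {x. 0 < \<mu> x} = classes \<rho> {x. 0 < \<nu> x}"
  unfolding fuzzy_rel_def set_eq_subset classes_subset_iff[OF assms] by simp

lemma quotient_op_iff:
  "quotient_op circ \<rho> h \<longleftrightarrow>
     (\<forall>a b \<gamma>. h (\<rho> `` {a}) \<gamma> (\<rho> `` {b}) = classes \<rho> (assoc_hyper circ a \<gamma> b))"
  unfolding quotient_op_def by (simp add: setcompr_eq_image)

lemma ball_quotient_UNIV: "(\<forall>X\<in>UNIV // \<rho>. P X) \<longleftrightarrow> (\<forall>a. P (\<rho> `` {a}))"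
  by (auto simp: quotient_def)

lemma regular_classes_congruent:
  assumes "equiv UNIV \<rho>" and "fuzzy_Gamma_regular circ \<rho>"
    and "(a, a') \<in> \<rho>" and "(b, b') \<in> \<rho>"
  shows "classes \<rho> (assoc_hyper circ a \<gamma> b) = classes \<rho> (assoc_hyper circ a' \<gamma> b')"
proof -
  have "fuzzy_rel \<rho> (circ a \<gamma> b) (circ a' \<gamma> b)" "fuzzy_rel \<rho> (circ a' \<gamma> b) (circ a' \<gamma> b')"
    using assms(2-4) unfolding fuzzy_Gamma_regular_def by blast+
  then show ?thesis
    unfolding assoc_hyper_def fuzzy_rel_iff_classes_eq[OF assms(1)] by simp
qed

definition quotient_hyperop :: "('m \<Rightarrow> 'g \<Rightarrow> 'm \<Rightarrow> 'm \<Rightarrow> real) \<Rightarrow> ('m \<times> 'm) set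
    \<Rightarrow> 'm set \<Rightarrow> 'g \<Rightarrow> 'm set \<Rightarrow> 'm set set" where
  "quotient_hyperop circ \<rho> X \<gamma> Y = classes \<rho> (assoc_hyper circ (SOME a. a \<in> X) \<gamma> (SOME b. b \<in> Y))"

lemma quotient_op_quotient_hyperop:
  assumes "equiv UNIV \<rho>" and "fuzzy_Gamma_regular circ \<rho>"
  shows "quotient_op circ \<rho> (quotient_hyperop circ \<rho>)"
  unfolding quotient_op_iff
proof (intro allI)
  fix a b \<gamma>
  have rep: "(x, SOME y. y \<in> \<rho> `` {x}) \<in> \<rho>" for x
    using someI[of "\<lambda>y. y \<in> \<rho> `` {x}", OF equiv_class_self[OF assms(1)]] by simp
  show "quotient_hyperop circ \<rho> (\<rho> `` {a}) \<gamma> (\<rho> `` {b}) = classes \<rho> (assoc_hyper circ a \<gamma> b)"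
    unfolding quotient_hyperop_def using regular_classes_congruent[OF assms rep rep] by simp
qed

lemma quotient_op_imp_regular:
  assumes "equiv UNIV \<rho>" and "quotient_op circ \<rho> h"
  shows "fuzzy_Gamma_regular circ \<rho>"
  unfolding fuzzy_Gamma_regular_def
proof (intro allI impI conjI)
  have h: "\<And>a b \<gamma>. classes \<rho> (assoc_hyper circ a \<gamma> b) = h (\<rho> `` {a}) \<gamma> (\<rho> `` {b})"
    using assms(2) by (simp add: quotient_op_iff)
  fix a b c \<gamma> assume "(a, b) \<in> \<rho>"
  then have "\<rho> `` {a} = \<rho> `` {b}"
    using assms(1) by (simp add: equiv_class_eq)
  then show "fuzzy_rel \<rho> (circ a \<gamma> c) (circ b \<gamma> c)" "fuzzy_rel \<rho> (circ c \<gamma> a) (circ c \<gamma> b)"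
    unfolding fuzzy_rel_iff_classes_eq[OF assms(1)] h[unfolded assoc_hyper_def] by simp_all
qed

lemma ex_quotient_op_iff_regular:
  assumes "equiv UNIV \<rho>"
  shows "(\<exists>h. quotient_op circ \<rho> h) \<longleftrightarrow> fuzzy_Gamma_regular circ \<rho>"
  using quotient_op_imp_regular quotient_op_quotient_hyperop assms by blast

lemma quotient_op_Gamma_hypersemigroup:
  assumes "equiv UNIV \<rho>" and "quotient_op circ \<rho> h"
    and "Gamma_hypersemigroup (UNIV :: 'm set) (assoc_hyper circ)"
  shows "Gamma_hypersemigroup (UNIV // \<rho>) h"
proof -
  have h: "\<And>a b \<gamma>. h (\<rho> `` {a}) \<gamma> (\<rho> `` {b}) = classes \<rho> (assoc_hyper circ a \<gamma> b)"
    using assms(2) by (simp add: quotient_op_iff)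
  have nonempty: "\<And>a b \<gamma>. assoc_hyper circ a \<gamma> b \<noteq> {}"
    and assoc: "\<And>x y z \<alpha> \<beta>. (\<Union>u\<in>assoc_hyper circ x \<alpha> y. assoc_hyper circ u \<beta> z)
       = (\<Union>v\<in>assoc_hyper circ y \<beta> z. assoc_hyper circ x \<alpha> v)"
    using assms(3) unfolding Gamma_hypersemigroup_def by simp_all
  show ?thesis unfolding Gamma_hypersemigroup_def
  proof (intro conjI ballI allI)
    fix X Y \<gamma> assume "X \<in> UNIV // \<rho>" "Y \<in> UNIV // \<rho>"
    then obtain a b where "X = \<rho> `` {a}" "Y = \<rho> `` {b}" by (auto elim!: quotientE)
    then show "h X \<gamma> Y \<noteq> {}" and "h X \<gamma> Y \<subseteq> UNIV // \<rho>"
      using h nonempty by (auto intro: quotientI)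
  next
    fix X Y Z \<alpha> \<beta> assume "X \<in> UNIV // \<rho>" "Y \<in> UNIV // \<rho>" "Z \<in> UNIV // \<rho>"
    then obtain x y z where xyz: "X = \<rho> `` {x}" "Y = \<rho> `` {y}" "Z = \<rho> `` {z}"
      by (auto elim!: quotientE)
    have "(\<Union>u\<in>h X \<alpha> Y. h u \<beta> Z) = classes \<rho> (\<Union>u\<in>assoc_hyper circ x \<alpha> y. assoc_hyper circ u \<beta> z)"
      using xyz h by (simp add: image_UN)
    also have "\<dots> = classes \<rho> (\<Union>v\<in>assoc_hyper circ y \<beta> z. assoc_hyper circ x \<alpha> v)"
      by (simp only: assoc)
    also have "\<dots> = (\<Union>v\<in>h Y \<beta> Z. h X \<alpha> v)"
      using xyz h by (simp add: image_UN)
    finally show "(\<Union>u\<in>h X \<alpha> Y. h u \<beta> Z) = (\<Union>v\<in>h Y \<beta> Z. h X \<alpha> v)" .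
  qed
qed

lemma strongly_regular_fuzzy_rel:
  assumes "equiv UNIV \<rho>" and "\<And>a \<gamma> b. \<exists>x. 0 < circ a \<gamma> b x"
    and strong: "fuzzy_Gamma_strongly_regular circ \<rho>"
    and "(a, b) \<in> \<rho>" and "(c, d) \<in> \<rho>"
  shows "fuzzy_rel \<rho> (circ a \<gamma> c) (circ b \<gamma> d)"
  unfolding fuzzy_rel_def
proof (intro conjI allI impI)
  fix x assume "0 < circ a \<gamma> c x"
  moreover obtain y where "0 < circ b \<gamma> d y" using assms(2) by blast
  ultimately show "\<exists>y. 0 < circ b \<gamma> d y \<and> (x, y) \<in> \<rho>"
    using strong assms(4,5) unfolding fuzzy_Gamma_strongly_regular_def by blast
next
  fix x assume "0 < circ b \<gamma> d x"
  moreover obtain y where "0 < circ a \<gamma> c y" using assms(2) by blast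
  moreover have "sym \<rho>" using assms(1) by (simp add: equiv_def)
  ultimately show "\<exists>y. 0 < circ a \<gamma> c y \<and> (x, y) \<in> \<rho>"
    using strong assms(4,5) unfolding fuzzy_Gamma_strongly_regular_def by (blast dest: symD)
qed

lemma strongly_regular_imp_regular:
  assumes "equiv UNIV \<rho>" and "\<And>a \<gamma> b. \<exists>x. 0 < circ a \<gamma> b x"
    and "fuzzy_Gamma_strongly_regular circ \<rho>"
  shows "fuzzy_Gamma_regular circ \<rho>"
proof -
  have "(c, c) \<in> \<rho>" for c
    using assms(1) unfolding equiv_def refl_on_def by blast
  then show ?thesis
    unfolding fuzzy_Gamma_regular_def using strongly_regular_fuzzy_rel[OF assms] by blast
qed

lemma quotient_op_single_valued_iff_strongly_regular:
  assumes "equiv UNIV \<rho>" and "\<And>a \<gamma> b. \<exists>x. 0 < circ a \<gamma> b x"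
    and "quotient_op circ \<rho> h"
  shows "(\<forall>X\<in>UNIV // \<rho>. \<forall>Y\<in>UNIV // \<rho>. \<forall>\<gamma>. \<exists>w. h X \<gamma> Y = {w})
     \<longleftrightarrow> fuzzy_Gamma_strongly_regular circ \<rho>"
  unfolding ball_quotient_UNIV
proof
  have h: "\<And>a b \<gamma>. h (\<rho> `` {a}) \<gamma> (\<rho> `` {b}) = classes \<rho> (assoc_hyper circ a \<gamma> b)"
    using assms(3) by (simp add: quotient_op_iff)
  have class_eq: "\<And>x y. (x, y) \<in> \<rho> \<longleftrightarrow> \<rho> `` {x} = \<rho> `` {y}"
    using equiv_class_eq_iff[OF assms(1)] by simp
  show "fuzzy_Gamma_strongly_regular circ \<rho>"
    if single: "\<forall>a b \<gamma>. \<exists>w. h (\<rho> `` {a}) \<gamma> (\<rho> `` {b}) = {w}"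
    unfolding fuzzy_Gamma_strongly_regular_def
  proof (intro allI impI)
    fix a b c d \<gamma> x y
    assume "(a, b) \<in> \<rho>" "(c, d) \<in> \<rho>" and x: "0 < circ a \<gamma> c x" and y: "0 < circ b \<gamma> d y"
    then have same: "h (\<rho> `` {b}) \<gamma> (\<rho> `` {d}) = h (\<rho> `` {a}) \<gamma> (\<rho> `` {c})"
      unfolding class_eq by simp
    obtain w where w: "h (\<rho> `` {a}) \<gamma> (\<rho> `` {c}) = {w}"
      using single by meson
    have "\<rho> `` {x} \<in> h (\<rho> `` {a}) \<gamma> (\<rho> `` {c})"
      unfolding h assoc_hyper_def using x by (intro imageI CollectI)
    moreover have "\<rho> `` {y} \<in> h (\<rho> `` {b}) \<gamma> (\<rho> `` {d})"
      unfolding h assoc_hyper_def using y by (intro imageI CollectI)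
    ultimately show "(x, y) \<in> \<rho>"
      unfolding class_eq same w by simp
  qed
  show "\<forall>a b \<gamma>. \<exists>w. h (\<rho> `` {a}) \<gamma> (\<rho> `` {b}) = {w}"
    if strong: "fuzzy_Gamma_strongly_regular circ \<rho>"
  proof (intro allI)
    fix a b \<gamma>
    obtain c where c: "0 < circ a \<gamma> b c" using assms(2) by blast
    have reflexive: "(z, z) \<in> \<rho>" for z
      using assms(1) unfolding equiv_def refl_on_def by blast
    have "\<rho> `` {x} = \<rho> `` {c}" if "x \<in> assoc_hyper circ a \<gamma> b" for x
      using strong[unfolded fuzzy_Gamma_strongly_regular_def, rule_format, OF reflexive reflexive _ c] that
      unfolding class_eq assoc_hyper_def by simp
    then have "h (\<rho> `` {a}) \<gamma> (\<rho> `` {b}) = (\<lambda>_. \<rho> `` {c}) ` assoc_hyper circ a \<gamma> b"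
      unfolding h by (rule image_cong[OF refl])
    also have "\<dots> = {\<rho> `` {c}}"
      using c by (intro image_constant) (simp add: assoc_hyper_def)
    finally show "\<exists>w. h (\<rho> `` {a}) \<gamma> (\<rho> `` {b}) = {w}" ..
  qed
qed

lemma regular_iff_quotient_Gamma_hypersemigroup:
  assumes "equiv UNIV \<rho>" and "Gamma_hypersemigroup (UNIV :: 'm set) (assoc_hyper circ)"
  shows "fuzzy_Gamma_regular circ \<rho> \<longleftrightarrow>
    (\<exists>h. quotient_op circ \<rho> h \<and> Gamma_hypersemigroup (UNIV // \<rho>) h)"
proof
  assume "fuzzy_Gamma_regular circ \<rho>"
  then obtain h where h: "quotient_op circ \<rho> h"
    unfolding ex_quotient_op_iff_regular[OF assms(1), symmetric] ..
  then show "\<exists>h. quotient_op circ \<rho> h \<and> Gamma_hypersemigroup (UNIV // \<rho>) h"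
    using quotient_op_Gamma_hypersemigroup[OF assms(1) h assms(2)] by blast
next
  assume "\<exists>h. quotient_op circ \<rho> h \<and> Gamma_hypersemigroup (UNIV // \<rho>) h"
  then obtain h where "quotient_op circ \<rho> h" by blast
  then show "fuzzy_Gamma_regular circ \<rho>"
    by (rule quotient_op_imp_regular[OF assms(1)])
qed

lemma strongly_regular_iff_quotient_Gamma_semigroup:
  assumes "equiv UNIV \<rho>" and "Gamma_hypersemigroup (UNIV :: 'm set) (assoc_hyper circ)"
  shows "fuzzy_Gamma_strongly_regular circ \<rho> \<longleftrightarrow>
    (\<exists>h. quotient_op circ \<rho> h \<and> Gamma_semigroup (UNIV // \<rho>) h)"
proof
  have "assoc_hyper circ a \<gamma> b \<noteq> {}" for a \<gamma> b
    using assms(2) by (simp add: Gamma_hypersemigroup_def)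
  then have nonempty: "\<And>a \<gamma> b. \<exists>x. 0 < circ a \<gamma> b x"
    by (simp add: assoc_hyper_def)
  note single_valued = quotient_op_single_valued_iff_strongly_regular[OF assms(1) nonempty]
  show "\<exists>h. quotient_op circ \<rho> h \<and> Gamma_semigroup (UNIV // \<rho>) h"
    if strong: "fuzzy_Gamma_strongly_regular circ \<rho>"
  proof -
    obtain h where h: "quotient_op circ \<rho> h"
      using strongly_regular_imp_regular[OF assms(1) nonempty strong]
      unfolding ex_quotient_op_iff_regular[OF assms(1), symmetric] ..
    have "Gamma_semigroup (UNIV // \<rho>) h"
      unfolding Gamma_semigroup_def
      using quotient_op_Gamma_hypersemigroup[OF assms(1) h assms(2)]
        single_valued[OF h, THEN iffD2, OF strong] by (intro conjI)
    with h show ?thesis by blast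
  qed
  show "fuzzy_Gamma_strongly_regular circ \<rho>"
    if "\<exists>h. quotient_op circ \<rho> h \<and> Gamma_semigroup (UNIV // \<rho>) h"
  proof -
    from that obtain h where h: "quotient_op circ \<rho> h" and "Gamma_semigroup (UNIV // \<rho>) h"
      by blast
    then show ?thesis
      unfolding Gamma_semigroup_def single_valued[OF h, symmetric] by (elim conjE)
  qed
qed

theorem theorem5p5:
  fixes circ :: "'m \<Rightarrow> 'g \<Rightarrow> 'm \<Rightarrow> 'm \<Rightarrow> real"
    and \<rho> :: "('m \<times> 'm) set"
  assumes "fuzzy_Gamma_hypersemigroup circ"
    and "Gamma_hypersemigroup (UNIV :: 'm set) (assoc_hyper circ)"
    and "equiv UNIV \<rho>"
  shows "(fuzzy_Gamma_regular circ \<rho> \<longleftrightarrow>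
            (\<exists>h. quotient_op circ \<rho> h \<and> Gamma_hypersemigroup (UNIV // \<rho>) h))
       \<and> (fuzzy_Gamma_strongly_regular circ \<rho> \<longleftrightarrow>
            (\<exists>h. quotient_op circ \<rho> h \<and> Gamma_semigroup (UNIV // \<rho>) h))"
  using regular_iff_quotient_Gamma_hypersemigroup[OF assms(3,2)]
    strongly_regular_iff_quotient_Gamma_semigroup[OF assms(3,2)] by (intro conjI)

end
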